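(* Let $V\subset\mathbb{R}^d$ be a generic suspended antichain and let $p\in S_V$ be a characteristic point with $D_p=\{v_1,\dots,v_k\}$. For every choice of coordinates $i_1\in T_p(v_1),\dots,i_k\in T_p(v_k)$ with $p_{i_j}>0$ for all $j=1,\dots,k$, there is a maximum $M$ of $S_V$ such that $M_{i_j}=p_{i_j}$ for all $j=1,\dots,k$ (and $M\ge p$). Consequently, if moreover $p_i>0$ for all $i$, there are at least $\prod_{j=1}^k|T_p(v_j)|$ maxima of $S_V$ above $p$.
   Context: For $x,y\in\mathbb{R}^d$, $x\le y$ (dominance order) means $x_i\le y_i$ for all $i$; $y\rhd x$ means $y_i>x_i$ for all $i$; $y\rhd_i x$ means $y_i=x_i$ and $y_j>x_j$ for all $j\neq i$. $V\subset\mathbb{R}^d$ is a finite antichain in the dominance order. The orthogonal surface $S_V$ is the topological boundary of $\langle V\rangle=\{x: x\ge v\text{ for some }v\in V\}$. For $p\in S_V$, $D_p=\{v\in V:v\le p\}$ and $T_p(v)=\{i:p_i=v_i\}$. $V$ is suspended if it contains, for each $i$, a suspension vertex $M_ie_i$ (with $M_i>0$, $e_i$ the $i$-th unit vector), and every other $v\in V$ satisfies $0\le v_i<M_i$ for all $i$. A suspended $V$ is generic if whenever $v\neq w\in V$ and $v_i=w_i$ for some $i$, both $v$ and $w$ are suspension vertices. Flats: $U_i(v)=\{p\in S_V: p\rhd_i v\}$; $v\sim_i w$ iff $U_i(v)\cap U_i(w)\neq\emptyset$, with reflexive–transitive closure $\sim_i^c$; the $i$-flat of $v$ is $F_i(v)=\overline{\bigcup_{w\sim_i^c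 v}U_i(w)}$, and an $i$-flat is any set of this form. A characteristic point is a point of $S_V$ lying in some $i$-flat for every $i$. A maximum of $S_V$ is a point $M\in S_V$ such that there is no $q\in S_V$ with $q\ge M$, $q\neq M$. *)

theory Defs
  imports "HOL-Analysis.Analysis"
begin

definition dom_le :: "real^'d \<Rightarrow> real^'d \<Rightarrow> bool" where
  "dom_le x y \<longleftrightarrow> (\<forall>i. x$i \<le> y$i)"

definition dom_gt_at :: "'d \<Rightarrow> real^'d \<Rightarrow> real^'d \<Rightarrow> bool" where
  "dom_gt_at i y x \<longleftrightarrow> y$i = x$i \<and> (\<forall>j. j \<noteq> i \<longrightarrow> y$j > x$j)"

definition antichain :: "(real^'d) set \<Rightarrow> bool" where
  "antichain V \<longleftrightarrow> (\<forall>v\<in>V. \<forall>w\<in>V. dom_le v w \<longrightarrow> v = w)"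

definition up_set :: "(real^'d) set \<Rightarrow> (real^'d) set" where
  "up_set V = {x. \<exists>v\<in>V. dom_le v x}"

definition orth_surface :: "(real^'d) set \<Rightarrow> (real^'d) set" where
  "orth_surface V = frontier (up_set V)"

definition Dp :: "(real^'d) set \<Rightarrow> real^'d \<Rightarrow> (real^'d) set" where
  "Dp V p = {v\<in>V. dom_le v p}"

definition Tp :: "real^'d \<Rightarrow> real^'d \<Rightarrow> 'd set" where
  "Tp p v = {i. p$i = v$i}"

definition susp_vertex :: "real^'d \<Rightarrow> 'd \<Rightarrow> real^'d" where
  "susp_vertex M i = (\<chi> j. if j = i then M$i else 0)"

definition suspended_with :: "(real^'d) set \<Rightarrow> real^'d \<Rightarrow> bool" where
  "suspended_with V M \<longleftrightarrow>
     (\<forall>i. M$i > 0 \<and> susp_vertex M i \<in> V) \<and>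
     (\<forall>v\<in>V. v \<notin> range (susp_vertex M) \<longrightarrow> (\<forall>i. 0 \<le> v$i \<and> v$i < M$i))"

definition suspended :: "(real^'d) set \<Rightarrow> bool" where
  "suspended V \<longleftrightarrow> (\<exists>M. suspended_with V M)"

definition generic :: "(real^'d) set \<Rightarrow> bool" where
  "generic V \<longleftrightarrow> (\<exists>M. suspended_with V M \<and>
     (\<forall>v\<in>V. \<forall>w\<in>V. v \<noteq> w \<and> (\<exists>i. v$i = w$i) \<longrightarrow>
        v \<in> range (susp_vertex M) \<and> w \<in> range (susp_vertex M)))"

definition Ui :: "(real^'d) set \<Rightarrow> 'd \<Rightarrow> real^'d \<Rightarrow> (real^'d) set" where
  "Ui V i v = {p \<in> orth_surface V. dom_gt_at i p v}"

definition sim_i :: "(real^'d) set \<Rightarrow> 'd \<Rightarrow> real^'d \<Rightarrow> real^'d \<Rightarrow> bool" where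
  "sim_i V i v w \<longleftrightarrow> v \<in> V \<and> w \<in> V \<and> Ui V i v \<inter> Ui V i w \<noteq> {}"

definition flat :: "(real^'d) set \<Rightarrow> 'd \<Rightarrow> real^'d \<Rightarrow> (real^'d) set" where
  "flat V i v = closure (\<Union> {Ui V i w | w. (sim_i V i)\<^sup>*\<^sup>* v w})"

definition is_flat :: "(real^'d) set \<Rightarrow> 'd \<Rightarrow> (real^'d) set \<Rightarrow> bool" where
  "is_flat V i F \<longleftrightarrow> (\<exists>v\<in>V. F = flat V i v)"

definition characteristic_point :: "(real^'d) set \<Rightarrow> real^'d \<Rightarrow> bool" where
  "characteristic_point V p \<longleftrightarrow> p \<in> orth_surface V \<and> (\<forall>i. \<exists>F. is_flat V i F \<and> p \<in> F)"

definition is_maximum :: "(real^'d) set \<Rightarrow> real^'d \<Rightarrow> bool" where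
  "is_maximum V M \<longleftrightarrow> M \<in> orth_surface V \<and> \<not> (\<exists>q\<in>orth_surface V. dom_le M q \<and> q \<noteq> M)"

end

theory Submission
  imports Defs
begin

text \<open>Among the points of S_V above p that keep the coordinates p_{i_j}, one first finds a point
  with all coordinates positive (raising the zero coordinates of p); the set of such points is
  compact, and a point q maximising the coordinate sum on it is a maximum of S_V. Indeed, in a
  free coordinate j, q can only fail to be raised if some vertex below q is tight exactly at j;
  in a fixed coordinate i_j the vertex v_j is tight, and genericity (a positive coordinate value
  determines the vertex) forces T_q(v_j) = {i_j}. The last property makes the maxima obtained
  from different choices of the i_j distinct, which gives the count.\<close>

lemma closed_up_set:
  assumes "finite V"
  shows "closed (up_set V)"
proof -
  have "up_set V = (\<Union>v\<in>V. \<Inter>i. {x. x$i \<ge> v$i})"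
    by (auto simp: up_set_def dom_le_def)
  moreover have "closed (\<Inter>i. {x::real^'d. x$i \<ge> v$i})" for v :: "real^'d"
    by (intro closed_INT ballI closed_halfspace_component_ge_cart)
  ultimately show ?thesis
    using assms by (auto intro!: closed_UN)
qed

lemma interior_up_set_iff:
  fixes V :: "(real^'d) set"
  shows "x \<in> interior (up_set V) \<longleftrightarrow> (\<exists>v\<in>V. \<forall>i. v$i < x$i)"
proof
  assume "x \<in> interior (up_set V)"
  then obtain e where e: "e > 0" "ball x e \<subseteq> up_set V"
    using mem_interior by blast
  define d where "d = e / (2 * real CARD('d))"
  have d: "d > 0"
    using e by (simp add: d_def)
  define y where "y = x - (\<chi> i. d)"
  have "norm (x - y) \<le> (\<Sum>i\<in>UNIV. \<bar>(x - y)$i\<bar>)"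
    by (rule norm_le_l1_cart)
  also have "\<dots> = real CARD('d) * d"
    using d by (simp add: y_def)
  also have "\<dots> < e"
    using e by (simp add: d_def)
  finally have "y \<in> ball x e"
    by (simp add: dist_norm)
  with e obtain v where "v \<in> V" "dom_le v y"
    by (auto simp: up_set_def)
  moreover have "v$i < x$i" for i
    using \<open>dom_le v y\<close> d by (auto simp: dom_le_def y_def intro: le_less_trans[of _ "x$i - d"])
  ultimately show "\<exists>v\<in>V. \<forall>i. v$i < x$i"
    by blast
next
  assume "\<exists>v\<in>V. \<forall>i. v$i < x$i"
  then obtain v where v: "v \<in> V" "\<forall>i. v$i < x$i"
    by blast
  have "open (\<Inter>i. {y::real^'d. y$i > v$i})"
    by (intro open_INT ballI open_halfspace_component_gt_cart) simp
  moreover have "(\<Inter>i. {y::real^'d. y$i > v$i}) \<subseteq> up_set V"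
    using v(1) unfolding up_set_def dom_le_def by (blast intro: less_imp_le)
  ultimately show "x \<in> interior (up_set V)"
    using v(2) by (intro interiorI) auto
qed

lemma orth_surface_iff:
  fixes V :: "(real^'d) set"
  assumes "finite V"
  shows "x \<in> orth_surface V \<longleftrightarrow> (\<exists>v\<in>V. dom_le v x) \<and> (\<forall>v\<in>V. \<exists>i. x$i \<le> v$i)"
proof -
  have "x \<in> orth_surface V \<longleftrightarrow> x \<in> up_set V \<and> x \<notin> interior (up_set V)"
    using closed_up_set[OF assms] by (simp add: orth_surface_def frontier_def)
  then show ?thesis
    unfolding interior_up_set_iff by (simp add: up_set_def not_less[symmetric])
qed

text \<open>The step e is smaller than every positive gap w_k - q_k, so no vertex that was not below q
  comes below the raised point.\<close>
lemma orth_surface_raise: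
  fixes V :: "(real^'d) set"
  assumes fin: "finite V" and qS: "q \<in> orth_surface V"
    and blocked: "\<forall>w\<in>V. dom_le w q \<longrightarrow> (\<exists>i. i \<notin> Z \<and> q$i \<le> w$i)"
  shows "\<exists>e>0. q + (\<chi> k. if k \<in> Z then e else 0) \<in> orth_surface V"
proof -
  define B where "B = (\<lambda>(w, k). w$k - q$k) ` {(w, k). w \<in> V \<and> w$k > q$k}"
  have "finite {(w, k). w \<in> V \<and> w$k > q$k}"
    by (rule finite_subset[of _ "V \<times> UNIV"]) (use fin in auto)
  then have "finite B"
    unfolding B_def by simp
  have B_pos: "b > 0" if "b \<in> B" for b
    using that by (auto simp: B_def)
  define e where "e = Min (insert 1 B) / 2"
  have Min_pos: "Min (insert 1 B) > 0"
    using \<open>finite B\<close> B_pos by (subst Min_gr_iff) auto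
  then have e: "e > 0"
    by (simp add: e_def)
  have e_less: "e < b" if "b \<in> B" for b
  proof -
    have "Min (insert 1 B) \<le> b"
      using \<open>finite B\<close> that by simp
    then show ?thesis
      using Min_pos by (simp add: e_def)
  qed
  define q' where "q' = q + (\<chi> k. if k \<in> Z then e else 0)"
  have q'_nth: "q'$k = q$k + (if k \<in> Z then e else 0)" for k
    by (simp add: q'_def)
  obtain v where "v \<in> V" "dom_le v q"
    using qS orth_surface_iff[OF fin] by blast
  then have "dom_le v q'"
    using e by (auto simp: dom_le_def q'_nth intro: order_trans)
  moreover have "\<exists>i. q'$i \<le> w$i" if w: "w \<in> V" for w
  proof (cases "dom_le w q")
    case True
    then obtain i where "i \<notin> Z" "q$i \<le> w$i"
      using blocked w by blast
    then show ?thesis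
      by (auto simp: q'_nth)
  next
    case False
    then obtain k where k: "w$k > q$k"
      by (auto simp: dom_le_def not_le)
    then have "w$k - q$k \<in> B"
      using w unfolding B_def by force
    then have "e < w$k - q$k"
      by (rule e_less)
    then show ?thesis
      using e by (intro exI[of _ k]) (auto simp: q'_nth)
  qed
  ultimately have "q' \<in> orth_surface V"
    using orth_surface_iff[OF fin] \<open>v \<in> V\<close> by blast
  then show ?thesis
    using e unfolding q'_def by blast
qed

lemma orth_surface_witness_or_raise:
  fixes V :: "(real^'d) set"
  assumes "finite V" and "q \<in> orth_surface V"
  obtains w where "w \<in> V" "dom_le w q" "\<forall>i. i \<noteq> j \<longrightarrow> w$i < q$i"
  | e where "e > 0" "q + (\<chi> k. if k = j then e else 0) \<in> orth_surface V"
proof (cases "\<exists>w\<in>V. dom_le w q \<and> (\<forall>i. i \<noteq> j \<longrightarrow> w$i < q$i)")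
  case False
  then have "\<forall>w\<in>V. dom_le w q \<longrightarrow> (\<exists>i. i \<notin> {j} \<and> q$i \<le> w$i)"
    by (auto simp: not_less)
  from orth_surface_raise[OF assms this] that(2) show ?thesis
    by fastforce
qed (use that(1) in blast)

lemma is_maximumI:
  fixes V :: "(real^'d) set"
  assumes fin: "finite V" and qS: "q \<in> orth_surface V"
    and witness: "\<And>j. \<exists>w\<in>V. dom_le w q \<and> (\<forall>i. i \<noteq> j \<longrightarrow> w$i < q$i)"
  shows "is_maximum V q"
  unfolding is_maximum_def
proof (intro conjI qS notI)
  assume "\<exists>q'\<in>orth_surface V. dom_le q q' \<and> q' \<noteq> q"
  then obtain q' where q': "q' \<in> orth_surface V" "dom_le q q'" "q' \<noteq> q"
    by blast
  then obtain j where j: "q$j < q'$j"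
    by (metis vec_eq_iff dom_le_def order_le_less)
  obtain w where w: "w \<in> V" "dom_le w q" "\<forall>i. i \<noteq> j \<longrightarrow> w$i < q$i"
    using witness by blast
  have "w$i < q'$i" for i
    using w(2,3) q'(2) j unfolding dom_le_def by (cases "i = j") (auto intro: le_less_trans less_le_trans)
  moreover obtain i where "q'$i \<le> w$i"
    using q'(1) w(1) orth_surface_iff[OF fin] by blast
  ultimately show False
    by (meson not_le)
qed

lemma susp_vertex_nth: "susp_vertex M a $ k = (if k = a then M$a else 0)"
  by (simp add: susp_vertex_def)

lemma suspended_with_nonneg:
  assumes "suspended_with V M" and "v \<in> V"
  shows "0 \<le> v$i"
  using assms unfolding suspended_with_def
  by (cases "v \<in> range (susp_vertex M)") (auto simp: susp_vertex_nth less_imp_le)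

lemma orth_surface_le_suspension:
  fixes V :: "(real^'d) set"
  assumes "finite V" and "suspended_with V M" and "q \<in> orth_surface V" and "\<forall>k. q$k > 0"
  shows "q$i \<le> M$i"
proof -
  have "susp_vertex M i \<in> V"
    using assms(2) by (simp add: suspended_with_def)
  then obtain k where "q$k \<le> susp_vertex M i $ k"
    using assms(3) orth_surface_iff[OF assms(1)] by blast
  then show ?thesis
    using assms(4)[rule_format, of k] by (auto simp: susp_vertex_nth split: if_splits)
qed

lemma compact_orth_surface_above:
  fixes V :: "(real^'d) set"
  assumes "finite V" and "suspended_with V M" and "\<forall>k. a$k > 0"
  shows "compact {q \<in> orth_surface V. dom_le a q}"
proof -
  have "{q \<in> orth_surface V. dom_le a q} \<subseteq> cbox 0 M"
  proof
    fix q assume q: "q \<in> {q \<in> orth_surface V. dom_le a q}"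
    have pos: "\<forall>k. q$k > 0"
      using assms(3) q unfolding dom_le_def by (auto intro: less_le_trans)
    then have "q$k \<le> M$k" for k
      using q orth_surface_le_suspension[OF assms(1,2)] by blast
    with pos show "q \<in> cbox 0 M"
      by (simp add: mem_box_cart less_imp_le)
  qed
  moreover have "{q \<in> orth_surface V. dom_le a q} = orth_surface V \<inter> (\<Inter>i. {q. a$i \<le> q$i})"
    by (auto simp: dom_le_def)
  moreover have "closed (orth_surface V \<inter> (\<Inter>i. {q. a$i \<le> q$i}))"
    by (intro closed_Int closed_INT ballI closed_halfspace_component_ge_cart)
      (simp add: orth_surface_def)
  ultimately show ?thesis
    unfolding compact_eq_bounded_closed using bounded_subset[OF bounded_cbox] by auto
qed

text \<open>Only suspension vertices share coordinate values, and a suspension vertex is positive in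
  a single coordinate.\<close>
lemma generic_eq_pos_coordinate_imp_eq:
  assumes "generic V" and "v \<in> V" and "w \<in> V" and "v$k = w$k" and "v$k > 0"
  shows "v = w"
proof (rule ccontr)
  assume "v \<noteq> w"
  obtain M where gen: "\<forall>v\<in>V. \<forall>w\<in>V. v \<noteq> w \<and> (\<exists>i. v$i = w$i) \<longrightarrow>
        v \<in> range (susp_vertex M) \<and> w \<in> range (susp_vertex M)"
    using assms(1) unfolding generic_def by blast
  have "v \<noteq> w \<and> (\<exists>i. v$i = w$i)"
    using \<open>v \<noteq> w\<close> assms(4) by blast
  with gen assms(2,3) obtain a b where a: "v = susp_vertex M a" and b: "w = susp_vertex M b"
    by blast
  have "k = a"
    using assms(5) a by (auto simp: susp_vertex_nth split: if_splits)
  moreover have "k = b"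
    using assms(4,5) b by (auto simp: susp_vertex_nth split: if_splits)
  ultimately show False
    using a b \<open>v \<noteq> w\<close> by simp
qed

lemma orth_surface_positive_lift:
  fixes V :: "(real^'d) set"
  assumes fin: "finite V" and sw: "suspended_with V M" and pS: "p \<in> orth_surface V"
    and I_pos: "\<forall>i\<in>I. p$i > 0"
    and tight: "\<forall>w\<in>V. dom_le w p \<longrightarrow> (\<exists>i\<in>I. w$i = p$i)"
  obtains p' where "p' \<in> orth_surface V" "dom_le p p'" "\<forall>k. p'$k > 0" "\<forall>i\<in>I. p'$i = p$i"
proof -
  obtain v where "v \<in> V" "dom_le v p"
    using pS orth_surface_iff[OF fin] by blast
  then have p_nonneg: "0 \<le> p$k" for k
    using suspended_with_nonneg[OF sw] by (auto simp: dom_le_def intro: order_trans)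
  define Z where "Z = {k. p$k = 0}"
  have "\<forall>w\<in>V. dom_le w p \<longrightarrow> (\<exists>i. i \<notin> Z \<and> p$i \<le> w$i)"
  proof (intro ballI impI)
    fix w assume "w \<in> V" "dom_le w p"
    then obtain i where "i \<in> I" "w$i = p$i"
      using tight by blast
    then show "\<exists>i. i \<notin> Z \<and> p$i \<le> w$i"
      using I_pos by (intro exI[of _ i]) (auto simp: Z_def)
  qed
  then obtain e where e: "e > 0" and p'S: "p + (\<chi> k. if k \<in> Z then e else 0) \<in> orth_surface V"
    using orth_surface_raise[OF fin pS] by blast
  have p'_nth: "(p + (\<chi> k. if k \<in> Z then e else 0))$k = p$k + (if k \<in> Z then e else 0)" for k
    by simp
  show ?thesis
  proof (rule that[OF p'S])
    show "dom_le p (p + (\<chi> k. if k \<in> Z then e else 0))"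
      using e by (simp add: dom_le_def)
    show "\<forall>k. (p + (\<chi> k. if k \<in> Z then e else 0))$k > 0"
      using e p_nonneg by (auto simp: Z_def order_le_less)
    show "\<forall>i\<in>I. (p + (\<chi> k. if k \<in> Z then e else 0))$i = p$i"
      using I_pos by (auto simp: Z_def)
  qed
qed

text \<open>At a positive point q of a generic surface every coordinate is tight for at most one vertex;
  the free coordinates are tight for their witnesses, so the fixed coordinate \<iota> v is the only
  one left for v.\<close>
lemma is_maximum_of_tight_witnesses:
  fixes V :: "(real^'d) set" and \<iota> :: "real^'d \<Rightarrow> 'd"
  assumes fin: "finite V" and gen: "generic V" and qS: "q \<in> orth_surface V"
    and q_pos: "\<forall>k. q$k > 0"
    and fixed: "\<And>v. v \<in> D \<Longrightarrow> v \<in> V \<and> dom_le v q \<and> q$(\<iota> v) = v$(\<iota> v)"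
    and free: "\<And>j. j \<notin> \<iota> ` D \<Longrightarrow> \<exists>w\<in>V. dom_le w q \<and> (\<forall>i. i \<noteq> j \<longrightarrow> w$i < q$i)"
  shows "is_maximum V q" and "\<forall>v\<in>D. Tp q v = {\<iota> v}"
proof -
  have unique: "v = w" if "v \<in> V" "w \<in> V" "v$k = q$k" "w$k = q$k" for v w k
  proof -
    have "v$k = w$k" "v$k > 0"
      using that(3,4) q_pos by auto
    then show ?thesis
      by (rule generic_eq_pos_coordinate_imp_eq[OF gen that(1,2)])
  qed
  have tight_only_fixed: "k = \<iota> v" if v: "v \<in> D" and k: "q$k = v$k" for v k
  proof (cases "k \<in> \<iota> ` D")
    case True
    then obtain v' where v': "v' \<in> D" "k = \<iota> v'"
      by blast
    have "v'$k = q$k"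
      using fixed[OF v'(1)] v'(2) by simp
    then have "v = v'"
      using unique[of v v' k] fixed[OF v] fixed[OF v'(1)] k by argo
    then show ?thesis
      using v'(2) by simp
  next
    case False
    then obtain w where w: "w \<in> V" "dom_le w q" "\<forall>i. i \<noteq> k \<longrightarrow> w$i < q$i"
      using free by blast
    obtain i where i: "q$i \<le> w$i"
      using qS w(1) orth_surface_iff[OF fin] by blast
    then have "i = k"
      using w(3) by (meson not_le)
    then have "w$k = q$k"
      using i w(2) unfolding dom_le_def by (simp add: order_antisym)
    then have "w = v"
      using unique[of w v k] w(1) fixed[OF v] k by argo
    show ?thesis
    proof (rule ccontr)
      assume "k \<noteq> \<iota> v"
      then have "w$(\<iota> v) < q$(\<iota> v)"
        using w(3) by simp
      then show False
        using \<open>w = v\<close> fixed[OF v] by simp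
    qed
  qed
  show "\<forall>v\<in>D. Tp q v = {\<iota> v}"
    using fixed tight_only_fixed unfolding Tp_def by blast
  show "is_maximum V q"
  proof (rule is_maximumI[OF fin qS])
    fix j
    show "\<exists>w\<in>V. dom_le w q \<and> (\<forall>i. i \<noteq> j \<longrightarrow> w$i < q$i)"
    proof (cases "j \<in> \<iota> ` D")
      case True
      then obtain v where v: "v \<in> D" "j = \<iota> v"
        by blast
      have "v$i < q$i" if "i \<noteq> j" for i
      proof -
        have "v$i \<le> q$i"
          using fixed[OF v(1)] by (simp add: dom_le_def)
        moreover have "q$i \<noteq> v$i"
          using tight_only_fixed[OF v(1), of i] v(2) that by blast
        ultimately show ?thesis
          by simp
      qed
      then show ?thesis
        using fixed[OF v(1)] by blast
    qed (use free in blast)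
  qed
qed

text \<open>A point q maximising the coordinate sum on the compact slice could be raised in a free
  coordinate j if it had no witness for j.\<close>
lemma orth_surface_witnessed_point_above:
  fixes V :: "(real^'d) set"
  assumes fin: "finite V" and sw: "suspended_with V M" and aS: "a \<in> orth_surface V"
    and a_pos: "\<forall>k. a$k > 0"
  obtains q where "q \<in> orth_surface V" "dom_le a q" "\<forall>i\<in>I. q$i = a$i"
    "\<And>j. j \<notin> I \<Longrightarrow> \<exists>w\<in>V. dom_le w q \<and> (\<forall>i. i \<noteq> j \<longrightarrow> w$i < q$i)"
proof -
  define K where "K = {q \<in> orth_surface V. dom_le a q} \<inter> (\<Inter>i\<in>I. {q. q$i = a$i})"
  have "closed (\<Inter>i\<in>I. {q::real^'d. q$i = a$i})"
    by (intro closed_INT ballI closed_Collect_eq continuous_intros)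
  then have "compact K"
    unfolding K_def using compact_orth_surface_above[OF fin sw a_pos] by blast
  moreover have "a \<in> K"
    using aS by (simp add: K_def dom_le_def)
  moreover have "continuous_on K (\<lambda>q. \<Sum>i\<in>UNIV. q$i)"
    by (intro continuous_intros)
  ultimately obtain q where qK: "q \<in> K"
    and q_max: "\<And>y. y \<in> K \<Longrightarrow> (\<Sum>i\<in>UNIV. y$i) \<le> (\<Sum>i\<in>UNIV. q$i)"
    using continuous_attains_sup[of K "\<lambda>q. \<Sum>i\<in>UNIV. q$i"] by blast
  have qS: "q \<in> orth_surface V" and aq: "dom_le a q" and qI: "\<forall>i\<in>I. q$i = a$i"
    using qK by (auto simp: K_def)
  have "\<exists>w\<in>V. dom_le w q \<and> (\<forall>i. i \<noteq> j \<longrightarrow> w$i < q$i)" if j: "j \<notin> I" for j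
  proof (rule orth_surface_witness_or_raise[OF fin qS, of j])
    fix e :: real
    assume e: "e > 0" and q2S: "q + (\<chi> k. if k = j then e else 0) \<in> orth_surface V"
    have "dom_le a (q + (\<chi> k. if k = j then e else 0))"
      using aq e unfolding dom_le_def by (simp add: add_increasing2)
    then have "q + (\<chi> k. if k = j then e else 0) \<in> K"
      using q2S qI j unfolding K_def by auto
    from q_max[OF this] show ?thesis
      using e by (simp add: sum.distrib)
  qed blast
  with qS aq qI that show ?thesis
    by blast
qed

lemma exists_maximum_fixing_coordinates:
  fixes V :: "(real^'d) set" and p :: "real^'d" and \<iota> :: "real^'d \<Rightarrow> 'd"
  assumes fin: "finite V" and gen: "generic V" and pS: "p \<in> orth_surface V"
    and \<iota>: "\<forall>v\<in>Dp V p. \<iota> v \<in> Tp p v \<and> p$(\<iota> v) > 0"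
  shows "\<exists>M. is_maximum V M \<and> dom_le p M \<and> (\<forall>v\<in>Dp V p. M$(\<iota> v) = p$(\<iota> v) \<and> Tp M v = {\<iota> v})"
proof -
  obtain Mv where sw: "suspended_with V Mv"
    using gen unfolding generic_def by (elim exE conjE)
  define I where "I = \<iota> ` Dp V p"
  have "\<forall>i\<in>I. p$i > 0"
    using \<iota> by (simp add: I_def)
  moreover have "\<forall>w\<in>V. dom_le w p \<longrightarrow> (\<exists>i\<in>I. w$i = p$i)"
  proof (intro ballI impI)
    fix w assume "w \<in> V" "dom_le w p"
    then have "\<iota> w \<in> I" "w$(\<iota> w) = p$(\<iota> w)"
      using \<iota> by (auto simp: I_def Tp_def Dp_def)
    then show "\<exists>i\<in>I. w$i = p$i"
      by blast
  qed
  ultimately obtain p' where p'S: "p' \<in> orth_surface V" and pp': "dom_le p p'"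
    and p'_pos: "\<forall>k. p'$k > 0" and p'I: "\<forall>i\<in>I. p'$i = p$i"
    by (rule orth_surface_positive_lift[OF fin sw pS])
  obtain q where qS: "q \<in> orth_surface V" and p'q: "dom_le p' q" and qI: "\<forall>i\<in>I. q$i = p$i"
    and free: "\<And>j. j \<notin> I \<Longrightarrow> \<exists>w\<in>V. dom_le w q \<and> (\<forall>i. i \<noteq> j \<longrightarrow> w$i < q$i)"
    using orth_surface_witnessed_point_above[OF fin sw p'S p'_pos, of I] p'I by metis
  have pq: "dom_le p q"
    using pp' p'q unfolding dom_le_def by (blast intro: order_trans)
  have q_pos: "\<forall>k. q$k > 0"
    using p'_pos p'q unfolding dom_le_def by (blast intro: less_le_trans)
  have fixed: "v \<in> V \<and> dom_le v q \<and> q$(\<iota> v) = v$(\<iota> v)" if "v \<in> Dp V p" for v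
  proof -
    have "v \<in> V" "dom_le v p" "p$(\<iota> v) = v$(\<iota> v)" "\<iota> v \<in> I"
      using that \<iota> by (auto simp: Dp_def Tp_def I_def)
    then show ?thesis
      using qI pq unfolding dom_le_def by (auto intro: order_trans)
  qed
  have "is_maximum V q" "\<forall>v\<in>Dp V p. Tp q v = {\<iota> v}"
    using is_maximum_of_tight_witnesses[OF fin gen qS q_pos fixed] free by (simp_all add: I_def)
  then show ?thesis
    using pq qI by (auto simp: I_def)
qed

text \<open>Distinct choices \<iota> give distinct maxima, since T_M(v) = {\<iota> v} recovers \<iota> from M.\<close>
lemma exists_maxima_above_card_prod:
  fixes V :: "(real^'d) set" and p :: "real^'d"
  assumes fin: "finite V" and gen: "generic V" and pS: "p \<in> orth_surface V"
    and pos: "\<forall>i. p$i > 0"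
  shows "\<exists>A. A \<subseteq> {M. is_maximum V M \<and> dom_le p M} \<and> finite A \<and>
           card A = (\<Prod>v\<in>Dp V p. card (Tp p v))"
proof -
  define S where "S = (\<Pi>\<^sub>E v\<in>Dp V p. Tp p v)"
  have "finite (Dp V p)"
    using fin by (simp add: Dp_def)
  then have "finite S" and card_S: "card S = (\<Prod>v\<in>Dp V p. card (Tp p v))"
    by (auto simp: S_def card_PiE intro!: finite_PiE)
  have "\<forall>\<sigma>\<in>S. \<exists>M. is_maximum V M \<and> dom_le p M \<and> (\<forall>v\<in>Dp V p. Tp M v = {\<sigma> v})"
  proof
    fix \<sigma> assume "\<sigma> \<in> S"
    then have "\<forall>v\<in>Dp V p. \<sigma> v \<in> Tp p v \<and> p$(\<sigma> v) > 0"
      using pos by (auto simp: S_def)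
    from exists_maximum_fixing_coordinates[OF fin gen pS this]
    show "\<exists>M. is_maximum V M \<and> dom_le p M \<and> (\<forall>v\<in>Dp V p. Tp M v = {\<sigma> v})"
      by blast
  qed
  then obtain Mf where Mf: "\<And>\<sigma>. \<sigma> \<in> S \<Longrightarrow>
      is_maximum V (Mf \<sigma>) \<and> dom_le p (Mf \<sigma>) \<and> (\<forall>v\<in>Dp V p. Tp (Mf \<sigma>) v = {\<sigma> v})"
    by metis
  have "inj_on Mf S"
  proof (rule inj_onI)
    fix \<sigma> \<tau> assume "\<sigma> \<in> S" "\<tau> \<in> S" "Mf \<sigma> = Mf \<tau>"
    then have "{\<sigma> v} = {\<tau> v}" if "v \<in> Dp V p" for v
      using Mf that by metis
    then have "\<sigma> v = \<tau> v" if "v \<in> Dp V p" for v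
      using that by blast
    then show "\<sigma> = \<tau>"
      using \<open>\<sigma> \<in> S\<close> \<open>\<tau> \<in> S\<close> unfolding S_def by (rule PiE_ext[rotated 2])
  qed
  then have "card (Mf ` S) = (\<Prod>v\<in>Dp V p. card (Tp p v))"
    using card_S by (simp add: card_image)
  moreover have "Mf ` S \<subseteq> {M. is_maximum V M \<and> dom_le p M}"
    using Mf by blast
  ultimately show ?thesis
    using \<open>finite S\<close> by blast
qed

theorem proposition5p1:
  fixes V :: "(real^'d) set" and p :: "real^'d"
  assumes "finite V" and "antichain V" and "generic V"
    and "characteristic_point V p"
  shows "(\<forall>\<iota> :: real^'d \<Rightarrow> 'd.
            (\<forall>v\<in>Dp V p. \<iota> v \<in> Tp p v \<and> p$(\<iota> v) > 0) \<longrightarrow>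
            (\<exists>M. is_maximum V M \<and> dom_le p M \<and> (\<forall>v\<in>Dp V p. M$(\<iota> v) = p$(\<iota> v))))
       \<and> ((\<forall>i. p$i > 0) \<longrightarrow>
            (\<exists>A. A \<subseteq> {M. is_maximum V M \<and> dom_le p M} \<and> finite A \<and>
                 card A = (\<Prod>v\<in>Dp V p. card (Tp p v))))"
proof -
  have pS: "p \<in> orth_surface V"
    using assms(4) by (simp add: characteristic_point_def)
  show ?thesis
    using exists_maximum_fixing_coordinates[OF assms(1,3) pS]
      exists_maxima_above_card_prod[OF assms(1,3) pS] by blast
qed

end
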